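(* For any non-negative integer $n$ there exists a function $\varphi\in\mathcal{S}(\mathbf{R})$, $\varphi\not\equiv 0$, satisfying the system of non-linear equations $$\int_{-\infty}^{+\infty} x^k \varphi(x)\,dx=\frac{\int_{-\infty}^{+\infty} x^k \varphi^2(x)\,dx}{\int_{-\infty}^{+\infty} \varphi^2(x)\,dx},\qquad k=0,1,2,\ldots,n.$$
   Context: $\mathcal{S}(\mathbf{R})$ denotes the Schwartz space of rapidly decreasing smooth real-valued functions on $\mathbf{R}$. *)

theory Defs
  imports "HOL-Analysis.Analysis"
begin

definition schwartz :: "(real \<Rightarrow> real) set" where
  "schwartz = {f. (\<forall>m. \<forall>x. (deriv ^^ m) f differentiable (at x)) \<and>
     (\<forall>j m. \<exists>C. \<forall>x. \<bar>x ^ j * (deriv ^^ m) f x\<bar> \<le> C)}"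

end

theory Submission
  imports Defs "HOL-Probability.Sinc_Integral" "HOL-Computational_Algebra.Polynomial"
begin

text \<open>Let G be a small multiple of the (n+1)-st derivative of exp (-x^2); integration by parts
  shows that its moments of order at most n vanish. The root psi = (1 - sqrt (1 - 4 G)) / 2 of
  psi - psi^2 = G is again a Schwartz function, so psi and psi^2 have the same moments up to
  order n, and psi divided by the integral of psi^2 solves the system. All derivatives of psi
  decay rapidly because psi' lies in the ideal generated by the functions p(x) exp (-x^2) inside
  the algebra generated by these functions, the constants and 1 / sqrt (1 - 4 G); since the
  derivative of 1 / sqrt (1 - 4 G) lies in this algebra again, the ideal is closed under
  differentiation.\<close>

section \<open>Polynomials times the Gaussian\<close>

definition gauss :: "real poly \<Rightarrow> real \<Rightarrow> real" where
  "gauss p x = poly p x * exp (- x\<^sup>2)"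

definition gauss_deriv :: "real poly \<Rightarrow> real poly" where
  "gauss_deriv p = pderiv p - smult 2 (pCons 0 p)"

lemma has_real_derivative_gauss: "(gauss p has_real_derivative gauss (gauss_deriv p) x) (at x)"
proof -
  have "((\<lambda>x. poly p x * exp (- x\<^sup>2)) has_real_derivative
      poly (pderiv p) x * exp (- x\<^sup>2) + poly p x * (exp (- x\<^sup>2) * - (2 * x))) (at x)"
    by (auto intro!: derivative_eq_intros poly_DERIV)
  then show ?thesis
    unfolding gauss_def[abs_def] by (simp add: gauss_deriv_def algebra_simps)
qed

lemma continuous_on_gauss [continuous_intros]:
  "continuous_on S g \<Longrightarrow> continuous_on S (\<lambda>x. gauss p (g x))"
  unfolding gauss_def by (intro continuous_intros)

lemma power_div_fact_le_exp: "0 \<le> x \<Longrightarrow> x ^ n / fact n \<le> exp (x::real)"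
proof -
  assume "0 \<le> x"
  then have "x ^ n / fact n \<le> (\<Sum>k\<le>n. x ^ k / fact k)"
    by (intro member_le_sum) auto
  also have "\<dots> \<le> exp x"
    using \<open>0 \<le> x\<close> summable_exp_generic[of x]
    by (auto simp: exp_def divide_inverse ac_simps intro!: sum_le_suminf)
  finally show ?thesis .
qed

lemma abs_power_mult_exp_le: "\<bar>x ^ i\<bar> * exp (- x\<^sup>2) \<le> 1 + fact i" for x :: real
proof -
  have "\<bar>x\<bar> ^ i \<le> 1 + (x\<^sup>2) ^ i"
  proof (cases "\<bar>x\<bar> \<le> 1")
    case True
    then have "\<bar>x\<bar> ^ i \<le> 1" by (intro power_le_one) auto
    then show ?thesis by (simp add: add_increasing2)
  next
    case False
    then have "\<bar>x\<bar> * 1 \<le> \<bar>x\<bar> * \<bar>x\<bar>" by (intro mult_left_mono) auto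
    then have "\<bar>x\<bar> ^ i \<le> (\<bar>x\<bar>\<^sup>2) ^ i"
      by (intro power_mono) (auto simp: power2_eq_square)
    then show ?thesis by simp
  qed
  also have "(x\<^sup>2) ^ i \<le> fact i * exp (x\<^sup>2)"
    using power_div_fact_le_exp[of "x\<^sup>2" i] by (simp add: field_simps)
  finally have "\<bar>x\<bar> ^ i * exp (- x\<^sup>2) \<le> (1 + fact i * exp (x\<^sup>2)) * exp (- x\<^sup>2)"
    by (intro mult_right_mono) auto
  also have "\<dots> = exp (- x\<^sup>2) + fact i"
    by (simp add: algebra_simps exp_minus)
  also have "\<dots> \<le> 1 + fact i" by simp
  finally show ?thesis by (simp add: power_abs)
qed

lemma bounded_gauss: "\<exists>C. \<forall>x. \<bar>gauss p x\<bar> \<le> C"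
proof -
  define C where "C = (\<Sum>i\<le>degree p. \<bar>coeff p i\<bar> * (1 + fact i))"
  have "\<bar>gauss p x\<bar> \<le> C" for x
  proof -
    have "gauss p x = (\<Sum>i\<le>degree p. coeff p i * (x ^ i * exp (- x\<^sup>2)))"
      unfolding gauss_def poly_altdef by (simp add: sum_distrib_right mult.assoc)
    also have "\<bar>\<dots>\<bar> \<le> (\<Sum>i\<le>degree p. \<bar>coeff p i\<bar> * (\<bar>x ^ i\<bar> * exp (- x\<^sup>2)))"
      by (rule order_trans[OF sum_abs]) (simp add: abs_mult)
    also have "\<dots> \<le> C" unfolding C_def
      by (intro sum_mono mult_left_mono abs_power_mult_exp_le) auto
    finally show ?thesis .
  qed
  then show ?thesis by blast
qed

section \<open>Rapidly decreasing functions\<close>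

definition rapid_decay :: "(real \<Rightarrow> real) \<Rightarrow> bool" where
  "rapid_decay f \<longleftrightarrow> (\<forall>j. \<exists>C. \<forall>x. \<bar>x ^ j * f x\<bar> \<le> C)"

lemma schwartz_iff_rapid_decay:
  "f \<in> schwartz \<longleftrightarrow>
    (\<forall>m x. (deriv ^^ m) f differentiable (at x)) \<and> (\<forall>m. rapid_decay ((deriv ^^ m) f))"
  unfolding schwartz_def rapid_decay_def by blast

lemma rapid_decay_gauss: "rapid_decay (gauss p)"
proof -
  have "x ^ j * gauss p x = gauss (monom 1 j * p) x" for j x
    by (simp add: gauss_def poly_monom)
  then show ?thesis
    unfolding rapid_decay_def using bounded_gauss by simp
qed

lemma rapid_decay_add: "rapid_decay f \<Longrightarrow> rapid_decay g \<Longrightarrow> rapid_decay (\<lambda>x. f x + g x)"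
  unfolding rapid_decay_def
proof (intro allI)
  fix j assume "\<forall>j. \<exists>C. \<forall>x. \<bar>x ^ j * f x\<bar> \<le> C" "\<forall>j. \<exists>C. \<forall>x. \<bar>x ^ j * g x\<bar> \<le> C"
  then obtain C D where "\<forall>x. \<bar>x ^ j * f x\<bar> \<le> C" "\<forall>x. \<bar>x ^ j * g x\<bar> \<le> D" by blast
  moreover have "\<bar>x ^ j * (f x + g x)\<bar> \<le> \<bar>x ^ j * f x\<bar> + \<bar>x ^ j * g x\<bar>" for x
    by (simp add: distrib_left abs_triangle_ineq)
  ultimately have "\<bar>x ^ j * (f x + g x)\<bar> \<le> C + D" for x
    by (meson add_mono order_trans)
  then show "\<exists>C. \<forall>x. \<bar>x ^ j * (f x + g x)\<bar> \<le> C" by blast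
qed

lemma rapid_decay_dominated:
  assumes "\<forall>x. \<bar>f x\<bar> \<le> K * \<bar>g x\<bar>" and "rapid_decay g"
  shows "rapid_decay f"
  unfolding rapid_decay_def
proof
  fix j
  obtain C where C: "\<forall>x. \<bar>x ^ j * g x\<bar> \<le> C"
    using \<open>rapid_decay g\<close> unfolding rapid_decay_def by blast
  have "\<bar>x ^ j * f x\<bar> \<le> \<bar>K\<bar> * C" for x
  proof -
    have "\<bar>x ^ j * f x\<bar> \<le> \<bar>x ^ j\<bar> * (\<bar>K\<bar> * \<bar>g x\<bar>)"
      unfolding abs_mult using assms(1)
      by (intro mult_left_mono) (auto intro: order_trans[OF _ mult_right_mono[OF abs_ge_self]])
    also have "\<dots> = \<bar>K\<bar> * \<bar>x ^ j * g x\<bar>" by (simp add: abs_mult)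
    also have "\<dots> \<le> \<bar>K\<bar> * C" using C by (intro mult_left_mono) auto
    finally show ?thesis .
  qed
  then show "\<exists>C. \<forall>x. \<bar>x ^ j * f x\<bar> \<le> C" by blast
qed

lemma rapid_decay_mult_bounded:
  assumes "rapid_decay f" and "\<forall>x. \<bar>g x\<bar> \<le> B"
  shows "rapid_decay (\<lambda>x. f x * g x)"
proof (rule rapid_decay_dominated[OF _ assms(1)])
  show "\<forall>x. \<bar>f x * g x\<bar> \<le> B * \<bar>f x\<bar>"
    using assms(2) by (metis abs_ge_zero abs_mult mult.commute mult_left_mono)
qed

lemma rapid_decay_cmult: "rapid_decay f \<Longrightarrow> rapid_decay (\<lambda>x. c * f x)"
  using rapid_decay_mult_bounded[of f "\<lambda>_. c" "\<bar>c\<bar>"] by (simp add: mult.commute)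

lemma rapid_decay_bounded: "rapid_decay f \<Longrightarrow> \<exists>C. \<forall>x. \<bar>f x\<bar> \<le> C"
  unfolding rapid_decay_def by (metis mult_1 power_0)

lemma rapid_decay_mult: "rapid_decay f \<Longrightarrow> rapid_decay g \<Longrightarrow> rapid_decay (\<lambda>x. f x * g x)"
  using rapid_decay_bounded rapid_decay_mult_bounded by blast

lemma rapid_decay_power_mult: "rapid_decay f \<Longrightarrow> rapid_decay (\<lambda>x. x ^ k * f x)"
  unfolding rapid_decay_def by (metis (no_types) mult.assoc power_add)

lemma rapid_decay_reflect: "rapid_decay f \<Longrightarrow> rapid_decay (\<lambda>x. f (- x))"
  unfolding rapid_decay_def
proof (intro allI)
  fix j assume "\<forall>j. \<exists>C. \<forall>x. \<bar>x ^ j * f x\<bar> \<le> C"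
  then obtain C where C: "\<forall>x. \<bar>x ^ j * f x\<bar> \<le> C" by blast
  have "\<bar>x ^ j * f (- x)\<bar> \<le> C" for x
    using C[rule_format, of "- x"] by (simp add: abs_mult power_abs)
  then show "\<exists>C. \<forall>x. \<bar>x ^ j * f (- x)\<bar> \<le> C" by blast
qed

lemma rapid_decay_integrable:
  assumes "rapid_decay f" and "continuous_on UNIV f"
  shows "integrable lborel f"
proof -
  obtain C0 C2 where C0: "\<forall>x. \<bar>x ^ 0 * f x\<bar> \<le> C0" and C2: "\<forall>x. \<bar>x ^ 2 * f x\<bar> \<le> C2"
    using assms(1) unfolding rapid_decay_def by blast
  have bound: "norm (f x) \<le> norm ((C0 + C2) * inverse (1 + x\<^sup>2))" for x
  proof -
    have "(1 + x\<^sup>2) * \<bar>f x\<bar> \<le> C0 + C2"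
      using C0[rule_format, of x] C2[rule_format, of x] by (simp add: abs_mult distrib_right)
    then have "norm (f x) \<le> (C0 + C2) * inverse (1 + x\<^sup>2)"
      by (simp add: field_simps add_pos_nonneg)
    also have "\<dots> \<le> norm ((C0 + C2) * inverse (1 + x\<^sup>2))"
      by simp
    finally show ?thesis .
  qed
  have "integrable lborel (\<lambda>x::real. inverse (1 + x\<^sup>2))"
    using integrable_inverse_1_plus_square by (simp add: set_integrable_def)
  then have "integrable lborel (\<lambda>x. (C0 + C2) * inverse (1 + x\<^sup>2))"
    by simp
  then show ?thesis
    by (rule Bochner_Integration.integrable_bound)
      (use assms(2) bound in \<open>auto simp: borel_measurable_continuous_onI\<close>)
qed

lemma rapid_decay_tendsto_at_top: "rapid_decay f \<Longrightarrow> (f \<longlongrightarrow> 0) at_top"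
proof -
  assume "rapid_decay f"
  then obtain C where C: "\<forall>x. \<bar>x ^ 1 * f x\<bar> \<le> C" unfolding rapid_decay_def by blast
  have "((\<lambda>x::real. C * inverse x) \<longlongrightarrow> 0) at_top"
    by (intro tendsto_mult_right_zero tendsto_inverse_0_at_top filterlim_ident)
  moreover have "eventually (\<lambda>x. norm (f x) \<le> C * inverse x) at_top"
  proof (rule eventually_at_top_linorderI[of 1])
    fix x :: real assume "1 \<le> x"
    then have "x * \<bar>f x\<bar> \<le> C" using C[rule_format, of x] by (simp add: abs_mult)
    then show "norm (f x) \<le> C * inverse x" using \<open>1 \<le> x\<close> by (simp add: field_simps)
  qed
  ultimately show ?thesis by (rule Lim_null_comparison[rotated])
qed

lemma rapid_decay_tendsto_at_bot: "rapid_decay f \<Longrightarrow> (f \<longlongrightarrow> 0) at_bot"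
  using rapid_decay_tendsto_at_top[OF rapid_decay_reflect] by (simp add: filterlim_at_bot_mirror)

lemma integral_deriv_rapid_decay_eq_0:
  assumes F: "\<And>x. (F has_real_derivative f x) (at x)"
    and "rapid_decay F" "rapid_decay f" and "continuous_on UNIV f"
  shows "(\<integral>x. f x \<partial>lborel) = 0"
proof -
  have "(LBINT x=-\<infinity>..\<infinity>. f x) = 0 - 0"
  proof (rule interval_integral_FTC_integrable)
    show "(F has_vector_derivative f x) (at x)" for x
      using F[of x] by (simp add: has_real_derivative_iff_has_vector_derivative)
    show "isCont f x" for x
      using \<open>continuous_on UNIV f\<close> by (simp add: continuous_on_eq_continuous_at)
    show "set_integrable lborel (einterval (- \<infinity>) \<infinity>) f"
      unfolding set_integrable_def using rapid_decay_integrable assms(3,4) by simp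
    show "((F \<circ> real_of_ereal) \<longlongrightarrow> 0) (at_right (- \<infinity>))"
      unfolding ereal_tendsto_simps1 using \<open>rapid_decay F\<close> by (rule rapid_decay_tendsto_at_bot)
    show "((F \<circ> real_of_ereal) \<longlongrightarrow> 0) (at_left \<infinity>)"
      unfolding ereal_tendsto_simps1 using \<open>rapid_decay F\<close> by (rule rapid_decay_tendsto_at_top)
  qed simp
  then show ?thesis
    by (simp add: interval_lebesgue_integral_def set_lebesgue_integral_def)
qed

lemma integral_power_mult_gauss_deriv:
  "(\<integral>x. x ^ k * gauss (gauss_deriv q) x \<partial>lborel) =
    - real k * (\<integral>x. x ^ (k - 1) * gauss q x \<partial>lborel)"
proof -
  define f where "f x = real k * (x ^ (k - 1) * gauss q x) + x ^ k * gauss (gauss_deriv q) x" for x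
  have "((\<lambda>x. x ^ k * gauss q x) has_real_derivative f x) (at x)" for x
    unfolding f_def
    by (rule DERIV_cong[OF DERIV_mult[OF DERIV_pow has_real_derivative_gauss]]) (simp add: algebra_simps)
  moreover have "rapid_decay f"
    unfolding f_def by (intro rapid_decay_add rapid_decay_cmult rapid_decay_power_mult rapid_decay_gauss)
  moreover have "continuous_on UNIV f"
    unfolding f_def by (intro continuous_intros)
  ultimately have "(\<integral>x. f x \<partial>lborel) = 0"
    by (intro integral_deriv_rapid_decay_eq_0[of "\<lambda>x. x ^ k * gauss q x"] rapid_decay_power_mult
        rapid_decay_gauss)
  moreover have "integrable lborel (\<lambda>x. x ^ j * gauss p x)" for j p
    by (intro rapid_decay_integrable rapid_decay_power_mult rapid_decay_gauss continuous_intros)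
  ultimately show ?thesis
    unfolding f_def by simp
qed

section \<open>Hermite functions\<close>

text \<open>gauss (hermite m) is the m-th derivative of exp (-x^2), i.e. hermite m = (-1)^m H_m for the
  physicists' Hermite polynomial H_m.\<close>

definition hermite :: "nat \<Rightarrow> real poly" where
  "hermite m = (gauss_deriv ^^ m) 1"

lemma integral_power_mult_gauss_hermite:
  "k < m \<Longrightarrow> (\<integral>x. x ^ k * gauss (hermite m) x \<partial>lborel) = 0"
proof (induction m arbitrary: k)
  case (Suc m)
  have "(\<integral>x. x ^ k * gauss (hermite (Suc m)) x \<partial>lborel) =
      - real k * (\<integral>x. x ^ (k - 1) * gauss (hermite m) x \<partial>lborel)"
    by (simp only: hermite_def funpow.simps o_apply integral_power_mult_gauss_deriv)
  also have "\<dots> = 0"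
    using Suc by (cases k) auto
  finally show ?case .
qed simp

lemma gauss_deriv_nonzero: "p \<noteq> 0 \<Longrightarrow> gauss_deriv p \<noteq> 0"
proof
  assume "p \<noteq> 0" "gauss_deriv p = 0"
  then have "degree (pderiv p) = Suc (degree p)"
    unfolding gauss_deriv_def by simp
  then show False by (simp add: degree_pderiv)
qed

lemma hermite_nonzero: "hermite m \<noteq> 0"
  by (induction m) (simp_all add: hermite_def gauss_deriv_nonzero)

lemma small_gauss_with_vanishing_moments:
  assumes "0 < \<delta>"
  obtains q x0 where "gauss q x0 \<noteq> 0" and "\<forall>x. \<bar>gauss q x\<bar> \<le> \<delta>"
    and "\<forall>k \<le> n. (\<integral>x. x ^ k * gauss q x \<partial>lborel) = 0"
proof -
  define h where "h = hermite (Suc n)"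
  obtain B where B: "\<forall>x. \<bar>gauss h x\<bar> \<le> B"
    using bounded_gauss by blast
  define \<epsilon> where "\<epsilon> = \<delta> / max B 1"
  have \<epsilon>_pos: "0 < \<epsilon>"
    using assms by (simp add: \<epsilon>_def)
  have scaled: "gauss (smult \<epsilon> h) x = \<epsilon> * gauss h x" for x
    by (simp add: gauss_def)
  obtain x0 where "poly h x0 \<noteq> 0"
    using hermite_nonzero poly_all_0_iff_0 unfolding h_def by blast
  then have "gauss (smult \<epsilon> h) x0 \<noteq> 0"
    using \<epsilon>_pos by (simp add: scaled gauss_def)
  moreover have "\<forall>x. \<bar>gauss (smult \<epsilon> h) x\<bar> \<le> \<delta>"
  proof
    fix x
    have "\<bar>gauss (smult \<epsilon> h) x\<bar> \<le> \<epsilon> * max B 1"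
      using B \<epsilon>_pos by (auto simp: scaled abs_mult intro!: mult_left_mono le_max_iff_disj[THEN iffD2])
    also have "\<dots> = \<delta>"
      by (simp add: \<epsilon>_def)
    finally show "\<bar>gauss (smult \<epsilon> h) x\<bar> \<le> \<delta>" .
  qed
  moreover have "\<forall>k \<le> n. (\<integral>x. x ^ k * gauss (smult \<epsilon> h) x \<partial>lborel) = 0"
    using integral_power_mult_gauss_hermite[of _ "Suc n", folded h_def]
    by (simp add: scaled mult.left_commute[of _ \<epsilon>])
  ultimately show ?thesis
    by (rule that)
qed

section \<open>An algebra closed under differentiation\<close>

inductive gauss_alg :: "(real \<Rightarrow> real) \<Rightarrow> (real \<Rightarrow> real) \<Rightarrow> bool" for r where
  const: "gauss_alg r (\<lambda>x. c)"
| generator: "gauss_alg r r"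
| gauss: "gauss_alg r (gauss p)"
| add: "gauss_alg r f \<Longrightarrow> gauss_alg r g \<Longrightarrow> gauss_alg r (\<lambda>x. f x + g x)"
| mult: "gauss_alg r f \<Longrightarrow> gauss_alg r g \<Longrightarrow> gauss_alg r (\<lambda>x. f x * g x)"

inductive gauss_ideal :: "(real \<Rightarrow> real) \<Rightarrow> (real \<Rightarrow> real) \<Rightarrow> bool" for r where
  gauss: "gauss_ideal r (gauss p)"
| mult: "gauss_ideal r f \<Longrightarrow> gauss_alg r e \<Longrightarrow> gauss_ideal r (\<lambda>x. f x * e x)"
| add: "gauss_ideal r f \<Longrightarrow> gauss_ideal r g \<Longrightarrow> gauss_ideal r (\<lambda>x. f x + g x)"

lemma gauss_alg_has_derivative:
  assumes r': "\<And>x. (r has_real_derivative r' x) (at x)" and "gauss_alg r r'"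
  shows "gauss_alg r f \<Longrightarrow> \<exists>f'. gauss_alg r f' \<and> (\<forall>x. (f has_real_derivative f' x) (at x))"
proof (induction rule: gauss_alg.induct)
  case const
  show ?case by (intro exI[of _ "\<lambda>x. 0"]) (auto intro: gauss_alg.const)
next
  case generator
  show ?case using assms by blast
next
  case (gauss p)
  show ?case
    using has_real_derivative_gauss by (intro exI[of _ "gauss (gauss_deriv p)"]) (auto intro: gauss_alg.gauss)
next
  case (add f g)
  then obtain f' g' where "gauss_alg r f'" "\<forall>x. (f has_real_derivative f' x) (at x)"
    "gauss_alg r g'" "\<forall>x. (g has_real_derivative g' x) (at x)" by blast
  then show ?case
    by (intro exI[of _ "\<lambda>x. f' x + g' x"]) (auto intro: gauss_alg.add DERIV_add)
next
  case (mult f g)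
  then obtain f' g' where "gauss_alg r f'" "\<forall>x. (f has_real_derivative f' x) (at x)"
    "gauss_alg r g'" "\<forall>x. (g has_real_derivative g' x) (at x)" by blast
  with mult.hyps show ?case
    by (intro exI[of _ "\<lambda>x. f' x * g x + g' x * f x"]) (auto intro: gauss_alg.intros DERIV_mult)
qed

lemma gauss_alg_bounded:
  assumes "\<forall>x. \<bar>r x\<bar> \<le> R"
  shows "gauss_alg r f \<Longrightarrow> \<exists>C. \<forall>x. \<bar>f x\<bar> \<le> C"
proof (induction rule: gauss_alg.induct)
  case (gauss p)
  show ?case by (rule bounded_gauss)
next
  case (add f g)
  then obtain A B where "\<forall>x. \<bar>f x\<bar> \<le> A" "\<forall>x. \<bar>g x\<bar> \<le> B" by blast
  then have "\<forall>x. \<bar>f x + g x\<bar> \<le> A + B" by (meson abs_triangle_ineq add_mono order_trans)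
  then show ?case by blast
next
  case (mult f g)
  then obtain A B where A: "\<forall>x. \<bar>f x\<bar> \<le> A" and B: "\<forall>x. \<bar>g x\<bar> \<le> B" by blast
  have "\<forall>x. \<bar>f x * g x\<bar> \<le> A * B"
    unfolding abs_mult using A B by (auto intro: mult_mono order_trans[OF abs_ge_zero])
  then show ?case by blast
qed (use assms in auto)

lemma gauss_ideal_has_derivative:
  assumes r': "\<And>x. (r has_real_derivative r' x) (at x)" and "gauss_alg r r'"
  shows "gauss_ideal r f \<Longrightarrow> \<exists>f'. gauss_ideal r f' \<and> (\<forall>x. (f has_real_derivative f' x) (at x))"
proof (induction rule: gauss_ideal.induct)
  case (gauss p)
  show ?case
    using has_real_derivative_gauss by (intro exI[of _ "gauss (gauss_deriv p)"]) (auto intro: gauss_ideal.gauss)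
next
  case (mult f e)
  obtain f' where "gauss_ideal r f'" "\<forall>x. (f has_real_derivative f' x) (at x)"
    using mult.IH by blast
  moreover obtain e' where "gauss_alg r e'" "\<forall>x. (e has_real_derivative e' x) (at x)"
    using gauss_alg_has_derivative[OF assms mult.hyps(2)] by blast
  moreover have "gauss_ideal r (\<lambda>x. f' x * e x + e' x * f x)"
    using gauss_ideal.mult[OF mult.hyps(1) \<open>gauss_alg r e'\<close>]
    by (auto intro!: gauss_ideal.add gauss_ideal.mult \<open>gauss_ideal r f'\<close> mult.hyps(2)
        simp: mult.commute[of "e' _"])
  ultimately show ?case
    by (intro exI[of _ "\<lambda>x. f' x * e x + e' x * f x"]) (auto intro: DERIV_mult)
next
  case (add f g)
  then obtain f' g' where "gauss_ideal r f'" "\<forall>x. (f has_real_derivative f' x) (at x)"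
    "gauss_ideal r g'" "\<forall>x. (g has_real_derivative g' x) (at x)" by blast
  then show ?case
    by (intro exI[of _ "\<lambda>x. f' x + g' x"]) (auto intro: gauss_ideal.add DERIV_add)
qed

lemma gauss_ideal_rapid_decay:
  assumes "\<forall>x. \<bar>r x\<bar> \<le> R"
  shows "gauss_ideal r f \<Longrightarrow> rapid_decay f"
proof (induction rule: gauss_ideal.induct)
  case (mult f e)
  then show ?case
    using gauss_alg_bounded[OF assms] rapid_decay_mult_bounded by blast
qed (auto intro: rapid_decay_gauss rapid_decay_add)

lemma gauss_ideal_higher_deriv:
  assumes "\<And>x. (r has_real_derivative r' x) (at x)" and "gauss_alg r r'" and "gauss_ideal r f"
  shows "gauss_ideal r ((deriv ^^ m) f) \<and> (\<forall>x. (deriv ^^ m) f differentiable (at x))"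
proof (induction m)
  case 0
  show ?case
    using assms(3) gauss_ideal_has_derivative[OF assms] by (auto simp: real_differentiable_def)
next
  case (Suc m)
  obtain f' where f': "gauss_ideal r f'" "\<forall>x. ((deriv ^^ m) f has_real_derivative f' x) (at x)"
    using Suc gauss_ideal_has_derivative[OF assms(1,2)] by blast
  then have higher: "(deriv ^^ Suc m) f = f'"
    by (auto intro!: DERIV_imp_deriv)
  obtain f'' where "\<forall>x. (f' has_real_derivative f'' x) (at x)"
    using f'(1) gauss_ideal_has_derivative[OF assms(1,2)] by blast
  then have "\<forall>x. f' differentiable (at x)"
    unfolding real_differentiable_def by blast
  with f'(1) show ?case
    unfolding higher by simp
qed

lemma schwartz_if_deriv_in_gauss_ideal:
  assumes "\<And>x. (r has_real_derivative r' x) (at x)" and "gauss_alg r r'" and "\<forall>x. \<bar>r x\<bar> \<le> R"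
    and "\<And>x. (f has_real_derivative f' x) (at x)" and "gauss_ideal r f'" and "rapid_decay f"
  shows "f \<in> schwartz"
proof -
  have "deriv f = f'"
    using assms(4) by (auto intro!: DERIV_imp_deriv)
  then have deriv_Suc: "(deriv ^^ Suc k) f = (deriv ^^ k) f'" for k
    by (simp only: funpow_Suc_right o_apply)
  have higher: "(deriv ^^ m) f differentiable (at x) \<and> rapid_decay ((deriv ^^ m) f)" for m x
  proof (cases m)
    case 0
    have "f differentiable (at x)"
      using assms(4) real_differentiable_def by blast
    with 0 show ?thesis
      using assms(6) by simp
  next
    case (Suc k)
    have "gauss_ideal r ((deriv ^^ k) f') \<and> (\<forall>x. (deriv ^^ k) f' differentiable (at x))"
      by (rule gauss_ideal_higher_deriv[OF assms(1,2,5)])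
    then show ?thesis
      unfolding Suc deriv_Suc using gauss_ideal_rapid_decay[OF assms(3)] by simp
  qed
  show ?thesis
    unfolding schwartz_iff_rapid_decay by (simp add: higher)
qed

lemma schwartz_cmult:
  assumes "f \<in> schwartz"
  shows "(\<lambda>x. c * f x) \<in> schwartz"
proof -
  have differentiable: "(deriv ^^ m) f differentiable (at x)" for m x
    using assms by (simp add: schwartz_iff_rapid_decay)
  have higher: "(deriv ^^ m) (\<lambda>x. c * f x) = (\<lambda>x. c * (deriv ^^ m) f x)" for m
  proof (induction m)
    case (Suc m)
    have "deriv (\<lambda>x. c * (deriv ^^ m) f x) x = c * (deriv ^^ Suc m) f x" for x
      using differentiable[of m x] by (auto intro!: DERIV_imp_deriv DERIV_cmult
          simp: DERIV_deriv_iff_real_differentiable[symmetric])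
    then show ?case
      using Suc.IH by auto
  qed simp
  show ?thesis
    using assms unfolding schwartz_iff_rapid_decay higher
    by (auto intro: rapid_decay_cmult simp: differentiable)
qed

lemma schwartz_rapid_decay:
  assumes "f \<in> schwartz"
  shows "rapid_decay f"
proof -
  have "rapid_decay ((deriv ^^ 0) f)"
    using assms unfolding schwartz_iff_rapid_decay by blast
  then show ?thesis
    by simp
qed

lemma schwartz_continuous:
  assumes "f \<in> schwartz"
  shows "continuous_on UNIV f"
proof -
  have "(deriv ^^ 0) f differentiable (at x)" for x
    using assms unfolding schwartz_iff_rapid_decay by blast
  then show ?thesis
    by (auto intro!: continuous_at_imp_continuous_on differentiable_imp_continuous_within)
qed

lemma integrable_power_mult_schwartz:
  assumes "f \<in> schwartz"
  shows "integrable lborel (\<lambda>x. x ^ k * f x)"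
proof (rule rapid_decay_integrable)
  show "rapid_decay (\<lambda>x. x ^ k * f x)"
    by (rule rapid_decay_power_mult[OF schwartz_rapid_decay[OF assms]])
  show "continuous_on UNIV (\<lambda>x. x ^ k * f x)"
    using schwartz_continuous[OF assms] by (intro continuous_intros)
qed

lemma integrable_power_mult_schwartz_square:
  assumes "f \<in> schwartz"
  shows "integrable lborel (\<lambda>x. x ^ k * (f x)\<^sup>2)"
  unfolding power2_eq_square
proof (rule rapid_decay_integrable)
  have "rapid_decay f"
    by (rule schwartz_rapid_decay[OF assms])
  then show "rapid_decay (\<lambda>x. x ^ k * (f x * f x))"
    by (intro rapid_decay_power_mult rapid_decay_mult)
  show "continuous_on UNIV (\<lambda>x. x ^ k * (f x * f x))"
    using schwartz_continuous[OF assms] by (intro continuous_intros)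
qed

lemma integral_square_pos:
  fixes f :: "real \<Rightarrow> real"
  assumes "continuous_on UNIV f" and "integrable lborel (\<lambda>x. (f x)\<^sup>2)" and "f x0 \<noteq> 0"
  shows "0 < (\<integral>x. (f x)\<^sup>2 \<partial>lborel)"
proof -
  have "(\<integral>x. (f x)\<^sup>2 \<partial>lborel) \<noteq> 0"
  proof
    assume "(\<integral>x. (f x)\<^sup>2 \<partial>lborel) = 0"
    then have "AE x in lborel. (f x)\<^sup>2 = 0"
      using integral_nonneg_eq_0_iff_AE[OF assms(2)] by simp
    then have "AE x in lebesgue. (f x)\<^sup>2 = 0"
      by (rule AE_completion)
    then have ae: "AE x \<in> UNIV in lebesgue. x \<in> {x. (f x)\<^sup>2 = 0}"
      by simp
    have closed: "closed {x. (f x)\<^sup>2 = 0}"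
      by (intro closed_Collect_eq continuous_on_power assms(1) continuous_on_const)
    have "x0 \<in> {x. (f x)\<^sup>2 = 0}"
      by (rule mem_closed_if_AE_lebesgue_open[OF open_UNIV closed ae]) simp
    with assms(3) show False
      by simp
  qed
  then show ?thesis
    by (simp add: order_less_le)
qed

section \<open>Solving the moment system\<close>

lemma small_quadratic_root:
  fixes g :: real
  assumes "g \<le> 1/4"
  defines "u \<equiv> (1 - sqrt (1 - 4 * g)) / 2"
  shows "u - u\<^sup>2 = g" and "\<bar>u\<bar> \<le> 2 * \<bar>g\<bar>"
proof -
  define s where "s = sqrt (1 - 4 * g)"
  have u: "u = (1 - s) / 2"
    by (simp add: u_def s_def)
  have "0 \<le> 1 - 4 * g"
    using assms(1) by simp
  then have s_sq: "s * s = 1 - 4 * g" and "0 \<le> s"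
    by (simp_all add: s_def)
  then show "u - u\<^sup>2 = g"
    unfolding u by (simp add: power2_eq_square field_simps)
  have "\<bar>1 - s\<bar> * (1 + s) = \<bar>(1 - s) * (1 + s)\<bar>"
    using \<open>0 \<le> s\<close> by (simp add: abs_mult)
  also have "\<dots> = 4 * \<bar>g\<bar>"
    using s_sq by (simp add: algebra_simps abs_mult)
  finally have "\<bar>1 - s\<bar> * (1 + s) = 4 * \<bar>g\<bar>" .
  moreover have "\<bar>1 - s\<bar> \<le> \<bar>1 - s\<bar> * (1 + s)"
    using \<open>0 \<le> s\<close> by (simp add: mult_le_cancel_left1)
  ultimately show "\<bar>u\<bar> \<le> 2 * \<bar>g\<bar>"
    unfolding u by simp
qed

lemma schwartz_quadratic_root:
  assumes small: "\<forall>x. \<bar>gauss q x\<bar> \<le> 1/8"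
  shows "\<exists>\<psi> \<in> schwartz. \<forall>x. \<psi> x - (\<psi> x)\<^sup>2 = gauss q x"
proof -
  define G' where "G' = gauss (gauss_deriv q)"
  define s where "s = (\<lambda>x. sqrt (1 - 4 * gauss q x))"
  define r where "r = (\<lambda>x. inverse (s x))"
  define \<psi> where "\<psi> = (\<lambda>x. (1 - s x) / 2)"
  have radicand_ge: "1/2 \<le> 1 - 4 * gauss q x" for x
    using small[rule_format, of x] by (simp add: abs_le_iff)
  have s_ge: "1/2 \<le> s x" for x
    unfolding s_def using radicand_ge[of x] by (intro real_le_rsqrt) (simp add: power2_eq_square)
  have r_bound: "\<forall>x. \<bar>r x\<bar> \<le> 2"
  proof
    fix x
    have "0 < s x" using s_ge[of x] by linarith
    then show "\<bar>r x\<bar> \<le> 2" using s_ge[of x] by (simp add: r_def field_simps)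
  qed
  have s_deriv: "(s has_real_derivative - 2 * G' x * r x) (at x)" for x
  proof -
    have "0 < 1 - 4 * gauss q x" using radicand_ge[of x] by linarith
    moreover have "((\<lambda>x. 1 - 4 * gauss q x) has_real_derivative 0 - 4 * G' x) (at x)"
      unfolding G'_def by (intro DERIV_diff DERIV_const DERIV_cmult has_real_derivative_gauss)
    ultimately show ?thesis
      unfolding s_def r_def by (rule DERIV_cong[OF DERIV_chain2[OF DERIV_real_sqrt]]) (simp add: field_simps)
  qed
  have r_deriv: "(r has_real_derivative 2 * G' x * (r x * r x * r x)) (at x)" for x
  proof -
    have "s x \<noteq> 0" using s_ge[of x] by linarith
    with s_deriv show ?thesis
      unfolding r_def by (rule DERIV_cong[OF DERIV_inverse_fun]) (simp add: r_def field_simps)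
  qed
  have \<psi>_deriv: "(\<psi> has_real_derivative G' x * r x) (at x)" for x
    unfolding \<psi>_def by (rule DERIV_cong[OF DERIV_cdivide[OF DERIV_diff[OF DERIV_const s_deriv]]]) simp
  have G_le: "gauss q x \<le> 1/4" for x
    using radicand_ge[of x] by linarith
  have \<psi>_quadratic: "\<psi> x - (\<psi> x)\<^sup>2 = gauss q x" for x
    using small_quadratic_root[OF G_le] by (simp add: \<psi>_def s_def)
  have "\<bar>\<psi> x\<bar> \<le> 2 * \<bar>gauss q x\<bar>" for x
    using small_quadratic_root[OF G_le] by (simp add: \<psi>_def s_def)
  then have "rapid_decay \<psi>"
    by (intro rapid_decay_dominated[OF _ rapid_decay_gauss]) blast
  moreover have "gauss_alg r (\<lambda>x. 2 * G' x * (r x * r x * r x))"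
    unfolding G'_def by (intro gauss_alg.intros)
  moreover have "gauss_ideal r (\<lambda>x. G' x * r x)"
    unfolding G'_def by (intro gauss_ideal.intros gauss_alg.intros)
  ultimately have "\<psi> \<in> schwartz"
    using r_deriv r_bound \<psi>_deriv by (intro schwartz_if_deriv_in_gauss_ideal)
  with \<psi>_quadratic show ?thesis
    by blast
qed

lemma moment_equation_rescale:
  fixes \<psi> :: "real \<Rightarrow> real"
  assumes "(\<integral>x. x ^ k * \<psi> x \<partial>lborel) = (\<integral>x. x ^ k * (\<psi> x)\<^sup>2 \<partial>lborel)"
    and "(\<integral>x. (\<psi> x)\<^sup>2 \<partial>lborel) \<noteq> 0"
  defines "c \<equiv> inverse (\<integral>x. (\<psi> x)\<^sup>2 \<partial>lborel)"
  shows "(\<integral>x. x ^ k * (c * \<psi> x) \<partial>lborel) =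
    (\<integral>x. x ^ k * (c * \<psi> x)\<^sup>2 \<partial>lborel) / (\<integral>x. (c * \<psi> x)\<^sup>2 \<partial>lborel)"
proof -
  have "(\<integral>x. x ^ k * (c * \<psi> x)\<^sup>2 \<partial>lborel) / (\<integral>x. (c * \<psi> x)\<^sup>2 \<partial>lborel) =
      (c\<^sup>2 * (\<integral>x. x ^ k * (\<psi> x)\<^sup>2 \<partial>lborel)) / (c\<^sup>2 * (\<integral>x. (\<psi> x)\<^sup>2 \<partial>lborel))"
    by (simp add: power_mult_distrib mult.left_commute[of _ "c\<^sup>2"])
  also have "\<dots> = c * (\<integral>x. x ^ k * \<psi> x \<partial>lborel)"
    using assms by (simp add: c_def field_simps)
  also have "\<dots> = (\<integral>x. x ^ k * (c * \<psi> x) \<partial>lborel)"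
    by (simp add: mult.left_commute[of _ c])
  finally show ?thesis ..
qed

lemma integral_power_mult_schwartz_diff_square:
  assumes "f \<in> schwartz"
  shows "(\<integral>x. x ^ k * f x \<partial>lborel) - (\<integral>x. x ^ k * (f x)\<^sup>2 \<partial>lborel) =
    (\<integral>x. x ^ k * (f x - (f x)\<^sup>2) \<partial>lborel)"
  using integrable_power_mult_schwartz[OF assms] integrable_power_mult_schwartz_square[OF assms]
  by (simp add: right_diff_distrib)

lemma moment_system_if_equal_moments:
  assumes \<psi>: "\<psi> \<in> schwartz" and "\<psi> x0 \<noteq> 0"
    and moments: "\<forall>k \<le> n. (\<integral>x. x ^ k * \<psi> x \<partial>lborel) = (\<integral>x. x ^ k * (\<psi> x)\<^sup>2 \<partial>lborel)"
  shows "\<exists>\<phi> \<in> schwartz. (\<exists>x. \<phi> x \<noteq> 0) \<and>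
    (\<forall>k \<le> n. (\<integral>x. x ^ k * \<phi> x \<partial>lborel) =
        (\<integral>x. x ^ k * (\<phi> x)\<^sup>2 \<partial>lborel) / (\<integral>x. (\<phi> x)\<^sup>2 \<partial>lborel))"
proof -
  have "integrable lborel (\<lambda>x. (\<psi> x)\<^sup>2)"
    using integrable_power_mult_schwartz_square[OF \<psi>, of 0] by simp
  with \<open>\<psi> x0 \<noteq> 0\<close> have norm_pos: "0 < (\<integral>x. (\<psi> x)\<^sup>2 \<partial>lborel)"
    by (intro integral_square_pos[OF schwartz_continuous[OF \<psi>]])
  define c where "c = inverse (\<integral>x. (\<psi> x)\<^sup>2 \<partial>lborel)"
  have "(\<lambda>x. c * \<psi> x) \<in> schwartz"
    by (rule schwartz_cmult[OF \<psi>])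
  moreover have "c * \<psi> x0 \<noteq> 0"
    using \<open>\<psi> x0 \<noteq> 0\<close> norm_pos by (simp add: c_def)
  moreover have "\<forall>k \<le> n. (\<integral>x. x ^ k * (c * \<psi> x) \<partial>lborel) =
      (\<integral>x. x ^ k * (c * \<psi> x)\<^sup>2 \<partial>lborel) / (\<integral>x. (c * \<psi> x)\<^sup>2 \<partial>lborel)"
    unfolding c_def using norm_pos moments by (simp add: moment_equation_rescale)
  ultimately show ?thesis
    by (intro bexI[of _ "\<lambda>x. c * \<psi> x"] conjI exI[of _ x0])
qed

theorem lemma1:
  fixes n :: nat
  shows "\<exists>\<phi> \<in> schwartz. (\<exists>x. \<phi> x \<noteq> 0) \<and>
    (\<forall>k \<le> n. (\<integral>x. x ^ k * \<phi> x \<partial>lborel) =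
        (\<integral>x. x ^ k * (\<phi> x)\<^sup>2 \<partial>lborel) / (\<integral>x. (\<phi> x)\<^sup>2 \<partial>lborel))"
proof -
  obtain q x0 where q_x0: "gauss q x0 \<noteq> 0" and q_small: "\<forall>x. \<bar>gauss q x\<bar> \<le> 1/8"
    and q_moments: "\<forall>k \<le> n. (\<integral>x. x ^ k * gauss q x \<partial>lborel) = 0"
    by (rule small_gauss_with_vanishing_moments[where \<delta> = "1/8" and n = n]) simp
  obtain \<psi> where \<psi>: "\<psi> \<in> schwartz" and \<psi>_quadratic: "\<And>x. \<psi> x - (\<psi> x)\<^sup>2 = gauss q x"
    using schwartz_quadratic_root[OF q_small] by blast
  have "\<forall>k \<le> n. (\<integral>x. x ^ k * \<psi> x \<partial>lborel) = (\<integral>x. x ^ k * (\<psi> x)\<^sup>2 \<partial>lborel)"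
  proof (intro allI impI)
    fix k
    assume "k \<le> n"
    then show "(\<integral>x. x ^ k * \<psi> x \<partial>lborel) = (\<integral>x. x ^ k * (\<psi> x)\<^sup>2 \<partial>lborel)"
      using integral_power_mult_schwartz_diff_square[OF \<psi>, of k] q_moments by (simp add: \<psi>_quadratic)
  qed
  moreover have "\<psi> x0 \<noteq> 0"
    using \<psi>_quadratic[of x0] q_x0 by auto
  ultimately show ?thesis
    by (intro moment_system_if_equal_moments[OF \<psi>])
qed

end
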